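(* Let $\{\mathbf{x}^k\}$ be generated by Algorithm 2 under the bounded-delay assumption, and let $k\ge0$. Then for any $\alpha>0$ and any $\mathbf{x}$ independent of $i_k$, $$\begin{aligned}\mathbb{E}_{i_k}\big\langle\nabla_{i_k} f(\hat{\mathbf{x}}^k),\mathbf{x}_{i_k}^{k+1}-\mathbf{x}_{i_k}\big\rangle\ge\ &\mathbb{E}_{i_k}\big[f(\mathbf{x}^{k+1})-f(\mathbf{x})\big]-\Big(1-\frac1m\Big)\big[f(\mathbf{x}^k)-f(\mathbf{x})\big]-\tfrac12\mathbb{E}_{i_k}\|\mathbf{x}^{k+1}-\mathbf{x}^k\|_{\mathbf{L}+\alpha L_c\mathbf{I}}^2\\&-\frac{\kappa L_r\tau/\alpha+2L_r\tau}{2m}\sum_{d=k-\tau}^{k-1}\|\mathbf{x}^{d+1}-\mathbf{x}^d\|^2-\frac{1}{2m}\sum_{d=k-\tau}^{k-1}\|\mathbf{x}^{d+1}-\mathbf{x}^d\|_{\mathbf{L}}^2,\end{aligned}$$ where $L_c=\max_iL_i$, $\kappa=L_r/L_c$, and $\mathbf{x}^d:=\mathbf{x}^0$ for $d<0$.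
   Context: Problem: $\min_{\mathbf{x}} F(\mathbf{x}):=f(\mathbf{x})+g(\mathbf{x})$ s.t. $\mathbf{A}\mathbf{x}=\mathbf{b}$, where $\mathbf{x}=(\mathbf{x}_1;\ldots;\mathbf{x}_m)$ with blocks $\mathbf{x}_i\in\mathbb{R}^{n_i}$, $g(\mathbf{x})=\sum_{i=1}^m g_i(\mathbf{x}_i)$, $\mathbf{A}=[\mathbf{A}_1,\ldots,\mathbf{A}_m]$ with $\mathbf{A}_i\in\mathbb{R}^{q\times n_i}$, $\mathbf{b}\in\mathbb{R}^q$; $f$ is convex and continuously differentiable, each $g_i$ is proper, convex, lower semicontinuous. $\mathbf{U}_i\mathbf{y}$ denotes the vector whose $i$-th block is $\mathbf{y}_i$ and other blocks zero; $\|\mathbf{z}\|_{\mathbf{M}}^2=\mathbf{z}^\top\mathbf{M}\mathbf{z}$. Assumption (gradient Lipschitz continuity): there are constants $L_i>0$ and $L_r$ with $\|\nabla_i f(\mathbf{x}+\mathbf{U}_i\mathbf{y})-\nabla_i f(\mathbf{x})\|\le L_i\|\mathbf{y}_i\|$ and $\|\nabla f(\mathbf{x}+\mathbf{U}_i\mathbf{y})-\nabla f(\mathbf{x})\|\le L_r\|\mathbf{y}_i\|$ for all $i,\mathbf{x},\mathbf{y}$. $\mathbf{L}=\mathrm{blkdiag}(L_1\mathbf{I}_{n_1},\ldots,L_m\mathbf{I}_{n_m})$. Algorithm 2 (async-parallel randomized primal-dual block update, as analyzed): choose $\mathbf{x}^0$, $\boldsymbol{\lambda}^0=\mathbf{0}$,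 $\mathbf{r}^0=\mathbf{A}\mathbf{x}^0-\mathbf{b}$, $\beta>0,\rho>0$, symmetric PSD $\mathbf{P}_i$. At iteration $k$, a block index $i_k\in\{1,\ldots,m\}$ and a (possibly outdated) point $\hat{\mathbf{x}}^k$ are used; $\mathbf{x}_i^{k+1}=\mathbf{x}_i^k$ for $i\ne i_k$ and $$\mathbf{x}_{i_k}^{k+1}\in\arg\min_{\mathbf{x}_{i_k}}\big\langle\nabla_{i_k} f(\hat{\mathbf{x}}^k)-\mathbf{A}_{i_k}^\top(\boldsymbol{\lambda}^k-\beta\mathbf{r}^k),\mathbf{x}_{i_k}\big\rangle+g_{i_k}(\mathbf{x}_{i_k})+\tfrac12\|\mathbf{x}_{i_k}-\mathbf{x}_{i_k}^k\|_{\mathbf{P}_{i_k}}^2;$$ then $\mathbf{r}^{k+1}=\mathbf{r}^k+\mathbf{A}_{i_k}(\mathbf{x}_{i_k}^{k+1}-\mathbf{x}_{i_k}^k)$ and $\boldsymbol{\lambda}^{k+1}=\boldsymbol{\lambda}^k-\rho\mathbf{r}^{k+1}$. Conditionally on the history before iteration $k$ (which determines $\mathbf{x}^k,\mathbf{r}^k,\boldsymbol{\lambda}^k$ and $\hat{\mathbf{x}}^k$), $i_k$ is uniformly distributed on $\{1,\ldots,m\}$; $\mathbb{E}_{i_k}$ denotes this conditional expectation, and "$\mathbf{x}$ independent of $i_k$" means $\mathbf{x}$ is determined by that history. Assumption (bounded delay): there is an integer $\tau\ge0$ such that $\hat{\mathbf{x}}^k=\mathbf{x}^k+\sum_{d\in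 J(k)}(\mathbf{x}^d-\mathbf{x}^{d+1})$ for some subset $J(k)\subseteq\{k-\tau,\ldots,k-1\}$. *)

theory Defs
  imports "HOL-Analysis.Analysis"
begin

text \<open>Block structure: coordinates of the ambient space real^'n are assigned to
  blocks 0..m-1 by blk.  A block vector y_i is represented as a full vector that
  vanishes outside block i.\<close>

definition blockproj :: "('n::finite \<Rightarrow> nat) \<Rightarrow> nat \<Rightarrow> real^'n \<Rightarrow> real^'n" where
  "blockproj blk i y = (\<chi> j. if blk j = i then y $ j else 0)"

definition wnorm2 :: "('n::finite \<Rightarrow> real) \<Rightarrow> real^'n \<Rightarrow> real" where
  "wnorm2 w z = (\<Sum>j\<in>UNIV. w j * (z $ j)^2)"

definition proper_fun :: "('a \<Rightarrow> ereal) \<Rightarrow> bool" where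
  "proper_fun g \<longleftrightarrow> (\<exists>y. g y < \<infinity>) \<and> (\<forall>y. g y > -\<infinity>)"

definition ereal_convex :: "('a::real_vector \<Rightarrow> ereal) \<Rightarrow> bool" where
  "ereal_convex g \<longleftrightarrow> (\<forall>x y (t::real). 0 \<le> t \<and> t \<le> 1 \<longrightarrow>
     g (t *\<^sub>R x + (1 - t) *\<^sub>R y) \<le> ereal t * g x + ereal (1 - t) * g y)"

definition ereal_lsc :: "('a::topological_space \<Rightarrow> ereal) \<Rightarrow> bool" where
  "ereal_lsc g \<longleftrightarrow> (\<forall>c. closed {y. g y \<le> c})"

text \<open>One block update of Algorithm 2: given current x, delayed xhat, residual r,
  multiplier lam and block i, the new point xn agrees with x off block i and its
  block i minimizes the prox-linearized objective.\<close>
definition block_update ::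
  "('n::finite \<Rightarrow> nat) \<Rightarrow> (real^'n \<Rightarrow> real^'n) \<Rightarrow> real^'n^'q \<Rightarrow> real
   \<Rightarrow> (nat \<Rightarrow> real^'n^'n) \<Rightarrow> (nat \<Rightarrow> real^'n \<Rightarrow> ereal)
   \<Rightarrow> nat \<Rightarrow> real^'n \<Rightarrow> real^'n \<Rightarrow> real^'q \<Rightarrow> real^'q \<Rightarrow> real^'n \<Rightarrow> bool" where
  "block_update blk gf A \<beta> P g i x xhat r lam xn \<longleftrightarrow>
     (let G = gf xhat - transpose A *v (lam - \<beta> *\<^sub>R r);
          obj = (\<lambda>w. ereal (blockproj blk i G \<bullet> w
                 + (1/2) * (blockproj blk i (w - x) \<bullet> (P i *v blockproj blk i (w - x))))
                 + g i w)
      in (\<forall>j. blk j \<noteq> i \<longrightarrow> xn $ j = x $ j) \<and>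
         (\<forall>w. (\<forall>j. blk j \<noteq> i \<longrightarrow> w $ j = x $ j) \<longrightarrow> obj xn \<le> obj w))"

end

theory Submission
  imports Defs
begin

text \<open>Write G for the delayed gradient at xhat^k and v_i = y_i - x^k for the update
  of block i.  Splitting G = grad f(x^k) + (G - grad f(x^k)), the block descent lemma
  bounds <grad f(x^k), v_i> below by f(y_i) - f(x^k) - L_i |v_i|^2 / 2, and Young's
  inequality with weight alpha L_c absorbs the gradient error.  Summing over the blocks
  leaves <G, x^k - z>, which the descent lemma along the delay
  x^k - xhat^k = sum_{d in J(k)} (x^(d+1) - x^d) together with convexity at xhat^k bounds
  below by f(x^k) - f(z) up to multiples of S^2, S = sum_{d in J(k)} |x^(d+1) - x^d|.
  Since J(k) has at most tau elements, S^2 <= tau sum_d |x^(d+1) - x^d|^2.\<close>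

lemma has_real_derivative_along_line:
  fixes f :: "'a::real_inner \<Rightarrow> real"
  assumes "\<forall>w. (f has_derivative (\<lambda>h. gf w \<bullet> h)) (at w)"
  shows "((\<lambda>t. f (u + t *\<^sub>R h)) has_real_derivative (gf (u + t *\<^sub>R h) \<bullet> h)) (at t within S)"
proof -
  have "((\<lambda>t. u + t *\<^sub>R h) has_derivative (\<lambda>s. s *\<^sub>R h)) (at t within S)"
    by (auto intro!: derivative_eq_intros)
  then have "((\<lambda>t. f (u + t *\<^sub>R h)) has_derivative (\<lambda>s. gf (u + t *\<^sub>R h) \<bullet> (s *\<^sub>R h))) (at t within S)"
    using has_derivative_compose assms by blast
  then show ?thesis
    by (rule has_derivative_imp_has_field_derivative) (simp add: mult.commute)
qed

lemma descent_lemma: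
  fixes f :: "'a::real_inner \<Rightarrow> real"
  assumes f_grad: "\<forall>w. (f has_derivative (\<lambda>h. gf w \<bullet> h)) (at w)"
    and growth: "\<forall>t. 0 \<le> t \<and> t \<le> 1 \<longrightarrow> (gf (u + t *\<^sub>R h) - gf u) \<bullet> h \<le> t * C"
  shows "f (u + h) \<le> f u + gf u \<bullet> h + C / 2"
proof -
  define \<psi> where "\<psi> t = f (u + t *\<^sub>R h) - t * (gf u \<bullet> h) - t\<^sup>2 * C / 2" for t
  have "\<psi> 1 \<le> \<psi> 0"
  proof (rule DERIV_nonpos_imp_nonincreasing[of 0 1 \<psi>])
    fix t :: real assume t: "0 \<le> t" "t \<le> 1"
    have "(\<psi> has_real_derivative (gf (u + t *\<^sub>R h) \<bullet> h - gf u \<bullet> h - (2 * t) * C / 2)) (at t)"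
      unfolding \<psi>_def[abs_def]
      by (auto intro!: derivative_eq_intros has_real_derivative_along_line[OF f_grad]
          simp: power2_eq_square)
    moreover have "gf (u + t *\<^sub>R h) \<bullet> h - gf u \<bullet> h - (2 * t) * C / 2 \<le> 0"
      using growth t by (simp add: inner_diff_left)
    ultimately show "\<exists>y. DERIV \<psi> t :> y \<and> y \<le> 0" by blast
  qed simp
  then show ?thesis unfolding \<psi>_def by simp
qed

lemma convex_on_gradient_inequality:
  fixes f :: "'a::real_inner \<Rightarrow> real"
  assumes f_convex: "convex_on UNIV f" and f_grad: "\<forall>w. (f has_derivative (\<lambda>h. gf w \<bullet> h)) (at w)"
  shows "f u + gf u \<bullet> (z - u) \<le> f z"
proof -
  define \<phi> where "\<phi> t = f (u + t *\<^sub>R (z - u))" for t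
  have "convex_on UNIV \<phi>"
  proof (rule convex_onI)
    fix t a b :: real assume "0 < t" "t < 1"
    have "\<phi> ((1 - t) *\<^sub>R a + t *\<^sub>R b)
        = f ((1 - t) *\<^sub>R (u + a *\<^sub>R (z - u)) + t *\<^sub>R (u + b *\<^sub>R (z - u)))"
      unfolding \<phi>_def by (simp add: algebra_simps)
    also have "\<dots> \<le> (1 - t) * \<phi> a + t * \<phi> b"
      unfolding \<phi>_def using convex_onD[OF f_convex, of t] \<open>0 < t\<close> \<open>t < 1\<close> by simp
    finally show "\<phi> ((1 - t) *\<^sub>R a + t *\<^sub>R b) \<le> (1 - t) * \<phi> a + t * \<phi> b" .
  qed simp
  then have "gf u \<bullet> (z - u) * (1 - 0) \<le> \<phi> 1 - \<phi> 0"
    by (rule convex_on_imp_above_tangent)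
      (use has_real_derivative_along_line[OF f_grad, of u "z - u" 0 UNIV] in \<open>auto simp: \<phi>_def[abs_def]\<close>)
  then show ?thesis by (simp add: \<phi>_def)
qed

lemma mult_le_Young:
  fixes p q c :: real
  assumes "0 < c"
  shows "p * q \<le> c / 2 * q\<^sup>2 + p\<^sup>2 / (2 * c)"
proof -
  have "2 * c * (p * q) \<le> 2 * c * (c / 2 * q\<^sup>2 + p\<^sup>2 / (2 * c))"
    using assms sum_squares_ge_zero[of "c * q - p" 0]
    by (simp add: power2_eq_square algebra_simps)
  then show ?thesis using assms by simp
qed

lemma blockproj_nth: "blockproj blk i v $ j = (if blk j = i then v $ j else 0)"
  by (simp add: blockproj_def)

lemma blockproj_eq_self: "(\<forall>j. blk j \<noteq> i \<longrightarrow> v $ j = 0) \<Longrightarrow> blockproj blk i v = v"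
  by (auto simp: vec_eq_iff blockproj_nth)

lemma blockproj_scaleR: "blockproj blk i (c *\<^sub>R v) = c *\<^sub>R blockproj blk i v"
  by (auto simp: vec_eq_iff blockproj_nth)

lemma inner_blockproj_left: "blockproj blk i w \<bullet> v = w \<bullet> blockproj blk i v"
  unfolding inner_vec_def by (intro sum.cong) (auto simp: blockproj_nth)

lemma power2_norm_vec: "(norm (w::real^'n::finite))\<^sup>2 = (\<Sum>j\<in>UNIV. (w $ j)\<^sup>2)"
  by (simp only: power2_norm_eq_inner) (simp add: inner_vec_def power2_eq_square)

lemma sum_blockproj:
  assumes "\<forall>j. blk j < m"
  shows "(\<Sum>i<m. blockproj blk i w) = w"
  using assms by (simp add: vec_eq_iff sum_component blockproj_nth sum.delta')

lemma sum_power2_norm_blockproj: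
  assumes "\<forall>j. blk j < m"
  shows "(\<Sum>i<m. (norm (blockproj blk i w))\<^sup>2) = (norm w)\<^sup>2"
proof -
  have "(\<Sum>i<m. (norm (blockproj blk i w))\<^sup>2)
      = (\<Sum>j\<in>UNIV. \<Sum>i<m. if blk j = i then (w $ j)\<^sup>2 else 0)"
    unfolding power2_norm_vec by (subst sum.swap) (auto intro!: sum.cong simp: blockproj_nth)
  also have "\<dots> = (norm w)\<^sup>2"
    using assms by (simp add: power2_norm_vec sum.delta')
  finally show ?thesis .
qed

lemma wnorm2_blockwise_weight:
  assumes "blockproj blk i v = v"
  shows "wnorm2 (\<lambda>j. c (blk j)) v = c i * (norm v)\<^sup>2"
proof -
  have "\<forall>j. blk j \<noteq> i \<longrightarrow> v $ j = 0"
    using assms by (metis blockproj_nth)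
  then have "wnorm2 (\<lambda>j. c (blk j)) v = (\<Sum>j\<in>UNIV. c i * (v $ j)\<^sup>2)"
    unfolding wnorm2_def by (intro sum.cong) auto
  then show ?thesis
    by (simp add: power2_norm_vec sum_distrib_left)
qed

lemma block_update_blockproj:
  assumes "block_update blk gf A \<beta> P g i x xhat r lam xn"
  shows "blockproj blk i (xn - x) = xn - x"
  using assms unfolding block_update_def Let_def by (auto intro!: blockproj_eq_self)

lemma block_update_increments:
  assumes "\<forall>j<k. idx j < m"
    and "\<forall>j<k. block_update blk gf A \<beta> P g (idx j) (x j) (xhat j) (r j) (lam j) (x (Suc j))"
    and "J \<subseteq> {..<k}"
  shows "\<forall>d\<in>J. idx d < m \<and> blockproj blk (idx d) (x (Suc d) - x d) = x (Suc d) - x d"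
proof
  fix d assume "d \<in> J"
  then have "d < k" using assms(3) by auto
  then have "block_update blk gf A \<beta> P g (idx d) (x d) (xhat d) (r d) (lam d) (x (Suc d))"
    using assms(2) by blast
  then show "idx d < m \<and> blockproj blk (idx d) (x (Suc d) - x d) = x (Suc d) - x d"
    using assms(1) \<open>d < k\<close> by (simp add: block_update_blockproj)
qed

lemma lipschitz_const_nonneg:
  fixes gf :: "real^'n::finite \<Rightarrow> real^'n"
  assumes "\<forall>j. blk j < m"
    and "\<forall>i<m. \<forall>u v. norm (gf (u + blockproj blk i v) - gf u) \<le> Lr * norm (blockproj blk i v)"
  shows "0 \<le> Lr"
proof -
  fix j :: 'n
  have "blockproj blk (blk j) (axis j 1) = axis j (1::real)"
    by (rule blockproj_eq_self) (auto simp: axis_def)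
  then have "0 \<le> Lr * norm (axis j (1::real))"
    using assms by (metis norm_ge_zero order_trans)
  then show ?thesis by (simp add: norm_axis_1)
qed

lemma norm_diff_le_sum_blocks:
  fixes gf :: "real^'n::finite \<Rightarrow> real^'n"
  assumes Lip_full: "\<forall>i<m. \<forall>u v. norm (gf (u + blockproj blk i v) - gf u) \<le> Lr * norm (blockproj blk i v)"
    and "finite J"
    and V_block: "\<forall>d\<in>J. ib d < m \<and> blockproj blk (ib d) (V d) = V d"
  shows "norm (gf (u + (\<Sum>d\<in>J. V d)) - gf u) \<le> Lr * (\<Sum>d\<in>J. norm (V d))"
  using \<open>finite J\<close> V_block
proof (induction J arbitrary: u rule: finite_induct)
  case (insert a F)
  let ?w = "u + (\<Sum>d\<in>F. V d)"
  have "norm (gf (?w + blockproj blk (ib a) (V a)) - gf ?w) \<le> Lr * norm (V a)"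
    using Lip_full insert.prems by (metis insert_iff)
  moreover have "norm (gf ?w - gf u) \<le> Lr * (\<Sum>d\<in>F. norm (V d))"
    using insert by auto
  ultimately have "norm ((gf (?w + blockproj blk (ib a) (V a)) - gf ?w) + (gf ?w - gf u))
      \<le> Lr * norm (V a) + Lr * (\<Sum>d\<in>F. norm (V d))"
    by (intro norm_triangle_le add_mono)
  then show ?case
    using insert by (simp add: algebra_simps)
qed simp

lemma descent_lemma_block:
  fixes f :: "real^'n::finite \<Rightarrow> real"
  assumes f_grad: "\<forall>w. (f has_derivative (\<lambda>h. gf w \<bullet> h)) (at w)"
    and Lip_block: "\<forall>u v. norm (blockproj blk i (gf (u + blockproj blk i v) - gf u))
                        \<le> Li * norm (blockproj blk i v)"
    and v_block: "blockproj blk i v = v"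
  shows "f (u + v) \<le> f u + gf u \<bullet> v + Li * (norm v)\<^sup>2 / 2"
proof (rule descent_lemma[OF f_grad], intro allI impI)
  fix t :: real assume t: "0 \<le> t \<and> t \<le> 1"
  have tv: "blockproj blk i (t *\<^sub>R v) = t *\<^sub>R v"
    using v_block by (simp add: blockproj_scaleR)
  have "(gf (u + t *\<^sub>R v) - gf u) \<bullet> v
      = blockproj blk i (gf (u + blockproj blk i (t *\<^sub>R v)) - gf u) \<bullet> v"
    using v_block tv by (simp add: inner_blockproj_left)
  also have "\<dots> \<le> norm (blockproj blk i (gf (u + blockproj blk i (t *\<^sub>R v)) - gf u)) * norm v"
    by (rule norm_cauchy_schwarz)
  also have "\<dots> \<le> Li * norm (t *\<^sub>R v) * norm v"
    using Lip_block tv by (metis mult_right_mono norm_ge_zero)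
  also have "\<dots> = t * (Li * (norm v)\<^sup>2)"
    using t by (simp add: power2_eq_square)
  finally show "(gf (u + t *\<^sub>R v) - gf u) \<bullet> v \<le> t * (Li * (norm v)\<^sup>2)" .
qed

lemma descent_lemma_block_sum:
  fixes f :: "real^'n::finite \<Rightarrow> real"
  assumes f_grad: "\<forall>w. (f has_derivative (\<lambda>h. gf w \<bullet> h)) (at w)"
    and Lip_full: "\<forall>i<m. \<forall>u v. norm (gf (u + blockproj blk i v) - gf u) \<le> Lr * norm (blockproj blk i v)"
    and "0 \<le> Lr" and "finite J"
    and V_block: "\<forall>d\<in>J. ib d < m \<and> blockproj blk (ib d) (V d) = V d"
  defines "h \<equiv> \<Sum>d\<in>J. V d" and "S \<equiv> \<Sum>d\<in>J. norm (V d)"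
  shows "f (u + h) \<le> f u + gf u \<bullet> h + Lr * S\<^sup>2 / 2"
proof (rule descent_lemma[OF f_grad], intro allI impI)
  fix t :: real assume t: "0 \<le> t \<and> t \<le> 1"
  have "norm (gf (u + (\<Sum>d\<in>J. t *\<^sub>R V d)) - gf u) \<le> Lr * (\<Sum>d\<in>J. norm (t *\<^sub>R V d))"
    using V_block by (intro norm_diff_le_sum_blocks[OF Lip_full \<open>finite J\<close>]) (auto simp: blockproj_scaleR)
  then have "norm (gf (u + t *\<^sub>R h) - gf u) \<le> Lr * t * S"
    using t by (simp add: h_def S_def scaleR_sum_right sum_distrib_left mult.assoc)
  moreover have "norm h \<le> S"
    unfolding h_def S_def by (rule norm_sum)
  moreover have "0 \<le> S"
    unfolding S_def by (simp add: sum_nonneg)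
  ultimately have "norm (gf (u + t *\<^sub>R h) - gf u) * norm h \<le> (Lr * t * S) * S"
    using \<open>0 \<le> Lr\<close> t by (intro mult_mono) auto
  then show "(gf (u + t *\<^sub>R h) - gf u) \<bullet> h \<le> t * (Lr * S\<^sup>2)"
    using norm_cauchy_schwarz[of "gf (u + t *\<^sub>R h) - gf u" h]
    by (simp add: power2_eq_square algebra_simps)
qed

lemma inner_block_ge:
  fixes f :: "real^'n::finite \<Rightarrow> real"
  assumes f_grad: "\<forall>w. (f has_derivative (\<lambda>h. gf w \<bullet> h)) (at w)"
    and Lip_block: "\<forall>u v. norm (blockproj blk i (gf (u + blockproj blk i v) - gf u))
                        \<le> Li * norm (blockproj blk i v)"
    and v_block: "blockproj blk i v = v" and "0 < c"
  shows "f (u + v) - f u - (Li + c) * (norm v)\<^sup>2 / 2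
           - (norm (blockproj blk i (G - gf u)))\<^sup>2 / (2 * c) \<le> G \<bullet> v"
proof -
  let ?e = "blockproj blk i (G - gf u)"
  have split: "G \<bullet> v = gf u \<bullet> v + ?e \<bullet> v"
    using v_block by (simp add: inner_blockproj_left inner_diff_left)
  have "- (?e \<bullet> v) \<le> norm ?e * norm v"
    using norm_cauchy_schwarz[of "- ?e" v] by simp
  also have "\<dots> \<le> c / 2 * (norm v)\<^sup>2 + (norm ?e)\<^sup>2 / (2 * c)"
    using \<open>0 < c\<close> by (rule mult_le_Young)
  finally have "- (?e \<bullet> v) \<le> c / 2 * (norm v)\<^sup>2 + (norm ?e)\<^sup>2 / (2 * c)" .
  moreover have "(Li + c) * (norm v)\<^sup>2 / 2 = Li * (norm v)\<^sup>2 / 2 + c / 2 * (norm v)\<^sup>2"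
    by (simp add: algebra_simps)
  ultimately show ?thesis
    using split descent_lemma_block[OF f_grad Lip_block v_block, of u] by linarith
qed

lemma inner_delayed_gradient_ge:
  fixes f :: "real^'n::finite \<Rightarrow> real"
  assumes f_convex: "convex_on UNIV f"
    and f_grad: "\<forall>w. (f has_derivative (\<lambda>h. gf w \<bullet> h)) (at w)"
    and Lip_full: "\<forall>i<m. \<forall>u v. norm (gf (u + blockproj blk i v) - gf u) \<le> Lr * norm (blockproj blk i v)"
    and "0 \<le> Lr" and "finite J"
    and V_block: "\<forall>d\<in>J. ib d < m \<and> blockproj blk (ib d) (V d) = V d"
    and u_eq: "u = uhat + (\<Sum>d\<in>J. V d)"
  defines "S \<equiv> \<Sum>d\<in>J. norm (V d)"
  shows "f u - f z - Lr * S\<^sup>2 / 2 \<le> gf uhat \<bullet> (u - z)"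
proof -
  have "f u \<le> f uhat + gf uhat \<bullet> (u - uhat) + Lr * S\<^sup>2 / 2"
    using descent_lemma_block_sum[OF f_grad Lip_full \<open>0 \<le> Lr\<close> \<open>finite J\<close> V_block, of uhat]
    by (simp add: u_eq S_def)
  moreover have "f uhat + gf uhat \<bullet> (z - uhat) \<le> f z"
    by (rule convex_on_gradient_inequality[OF f_convex f_grad])
  moreover have "gf uhat \<bullet> (u - z) = gf uhat \<bullet> (u - uhat) - gf uhat \<bullet> (z - uhat)"
    by (simp add: inner_diff_right)
  ultimately show ?thesis by linarith
qed

lemma sum_inner_blockproj_ge:
  fixes f :: "real^'n::finite \<Rightarrow> real"
  assumes blk_range: "\<forall>j. blk j < m"
    and f_grad: "\<forall>w. (f has_derivative (\<lambda>h. gf w \<bullet> h)) (at w)"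
    and Lip_block: "\<forall>i<m. \<forall>u v. norm (blockproj blk i (gf (u + blockproj blk i v) - gf u))
                        \<le> L i * norm (blockproj blk i v)"
    and "0 < c"
    and y_block: "\<forall>i<m. blockproj blk i (y i - u) = y i - u"
  shows "(\<Sum>i<m. f (y i)) - real m * f u - (\<Sum>i<m. wnorm2 (\<lambda>j. L (blk j) + c) (y i - u)) / 2
           - (norm (G - gf u))\<^sup>2 / (2 * c) + G \<bullet> (u - z)
         \<le> (\<Sum>i<m. blockproj blk i G \<bullet> (y i - z))"
proof -
  let ?e = "\<lambda>i. blockproj blk i (G - gf u)"
  let ?w = "\<lambda>i. wnorm2 (\<lambda>j. L (blk j) + c) (y i - u)"
  have block: "f (y i) - f u - ?w i / 2 - (norm (?e i))\<^sup>2 / (2 * c) + blockproj blk i G \<bullet> (u - z)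
      \<le> blockproj blk i G \<bullet> (y i - z)" if "i < m" for i
  proof -
    have "blockproj blk i G \<bullet> (y i - u) = G \<bullet> (y i - u)"
      using y_block \<open>i < m\<close> by (simp add: inner_blockproj_left)
    then have "blockproj blk i G \<bullet> (y i - z) = G \<bullet> (y i - u) + blockproj blk i G \<bullet> (u - z)"
      using inner_add_right[of "blockproj blk i G" "y i - u" "u - z"] by simp
    moreover have "?w i = (L i + c) * (norm (y i - u))\<^sup>2"
      using y_block \<open>i < m\<close> wnorm2_blockwise_weight[of blk i "y i - u" "\<lambda>i. L i + c"] by simp
    ultimately show ?thesis
      using inner_block_ge[OF f_grad _ _ \<open>0 < c\<close>, of blk i "L i" "y i - u" u G]
        Lip_block y_block \<open>i < m\<close> by simp
  qed
  have "(\<Sum>i<m. blockproj blk i G \<bullet> (u - z)) = G \<bullet> (u - z)"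
    by (simp add: inner_sum_left[symmetric] sum_blockproj[OF blk_range])
  moreover have "(\<Sum>i<m. (norm (?e i))\<^sup>2 / (2 * c)) = (norm (G - gf u))\<^sup>2 / (2 * c)"
    by (simp add: sum_divide_distrib[symmetric] sum_power2_norm_blockproj[OF blk_range])
  moreover have "(\<Sum>i<m. f (y i) - f u - ?w i / 2 - (norm (?e i))\<^sup>2 / (2 * c) + blockproj blk i G \<bullet> (u - z))
      \<le> (\<Sum>i<m. blockproj blk i G \<bullet> (y i - z))"
    using block by (intro sum_mono) simp
  ultimately show ?thesis
    by (simp add: sum.distrib sum_subtractf sum_divide_distrib)
qed

lemma sum_inner_blockproj_delayed_gradient_ge:
  fixes f :: "real^'n::finite \<Rightarrow> real"
  assumes blk_range: "\<forall>j. blk j < m"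
    and f_convex: "convex_on UNIV f"
    and f_grad: "\<forall>w. (f has_derivative (\<lambda>h. gf w \<bullet> h)) (at w)"
    and Lip_block: "\<forall>i<m. \<forall>u v. norm (blockproj blk i (gf (u + blockproj blk i v) - gf u))
                        \<le> L i * norm (blockproj blk i v)"
    and Lip_full: "\<forall>i<m. \<forall>u v. norm (gf (u + blockproj blk i v) - gf u) \<le> Lr * norm (blockproj blk i v)"
    and "0 \<le> Lr" and "0 < c" and "finite J"
    and V_block: "\<forall>d\<in>J. ib d < m \<and> blockproj blk (ib d) (V d) = V d"
    and u_eq: "u = uhat + (\<Sum>d\<in>J. V d)"
    and y_block: "\<forall>i<m. blockproj blk i (y i - u) = y i - u"
  defines "S \<equiv> \<Sum>d\<in>J. norm (V d)"
  shows "(\<Sum>i<m. f (y i) - f z) - (real m - 1) * (f u - f z)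
           - (\<Sum>i<m. wnorm2 (\<lambda>j. L (blk j) + c) (y i - u)) / 2
           - (Lr\<^sup>2 / (2 * c) + Lr / 2) * S\<^sup>2
         \<le> (\<Sum>i<m. blockproj blk i (gf uhat) \<bullet> (y i - z))"
proof -
  have "norm (gf (uhat + (\<Sum>d\<in>J. V d)) - gf uhat) \<le> Lr * S"
    unfolding S_def by (rule norm_diff_le_sum_blocks[OF Lip_full \<open>finite J\<close> V_block])
  then have "(norm (gf uhat - gf u))\<^sup>2 \<le> (Lr * S)\<^sup>2"
    by (simp add: u_eq norm_minus_commute power_mono)
  then have gradient_error: "(norm (gf uhat - gf u))\<^sup>2 / (2 * c) \<le> Lr\<^sup>2 / (2 * c) * S\<^sup>2"
    using \<open>0 < c\<close> by (simp add: divide_right_mono power_mult_distrib)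
  have "(\<Sum>i<m. f (y i) - f z) - (real m - 1) * (f u - f z)
      = (\<Sum>i<m. f (y i)) - real m * f u + (f u - f z)"
    by (simp add: sum_subtractf algebra_simps)
  moreover have "(Lr\<^sup>2 / (2 * c) + Lr / 2) * S\<^sup>2 = Lr\<^sup>2 / (2 * c) * S\<^sup>2 + Lr * S\<^sup>2 / 2"
    by (simp add: algebra_simps)
  ultimately show ?thesis
    using sum_inner_blockproj_ge[OF blk_range f_grad Lip_block \<open>0 < c\<close> y_block, of "gf uhat" z]
      inner_delayed_gradient_ge[OF f_convex f_grad Lip_full \<open>0 \<le> Lr\<close> \<open>finite J\<close> V_block u_eq, of z]
      gradient_error
    unfolding S_def by linarith
qed

lemma power2_sum_le_window:
  fixes a :: "int \<Rightarrow> real"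
  assumes "J \<subseteq> {k - \<tau>..<k}"
  shows "(\<Sum>d\<in>J. a (int d))\<^sup>2 \<le> real \<tau> * (\<Sum>d\<in>{int k - int \<tau>..<int k}. (a d)\<^sup>2)"
proof -
  have "card J \<le> \<tau>"
    using card_mono[OF _ assms] by simp
  have "(\<Sum>d\<in>J. (a (int d))\<^sup>2) = (\<Sum>d\<in>int ` J. (a d)\<^sup>2)"
    by (simp add: sum.reindex)
  also have "\<dots> \<le> (\<Sum>d\<in>{int k - int \<tau>..<int k}. (a d)\<^sup>2)"
  proof (intro sum_mono2)
    show "int ` J \<subseteq> {int k - int \<tau>..<int k}"
    proof
      fix e assume "e \<in> int ` J"
      then obtain d where "d \<in> J" "e = int d" by blast
      with assms have "k - \<tau> \<le> d" "d < k" "e = int d" by auto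
      then show "e \<in> {int k - int \<tau>..<int k}" by simp
    qed
  qed auto
  finally have "(\<Sum>d\<in>J. (a (int d))\<^sup>2) * card J \<le> (\<Sum>d\<in>{int k - int \<tau>..<int k}. (a d)\<^sup>2) * \<tau>"
    using \<open>card J \<le> \<tau>\<close> by (intro mult_mono) (auto intro: sum_nonneg)
  then show ?thesis
    using sum_squared_le_sum_of_squares[of "\<lambda>d. a (int d)" J] by (simp add: mult.commute)
qed

text \<open>Through \<open>nat\<close>, negative indices \<open>d\<close> in the window read \<open>x\<^sup>d = x\<^sup>0\<close>, so their terms vanish.\<close>

lemma delay_penalty_le_window:
  fixes x :: "nat \<Rightarrow> 'a::real_normed_vector"
  assumes "J \<subseteq> {k - \<tau>..<k}" and "0 \<le> Lr" and "0 < Lc" and "0 < \<alpha>"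
  shows "(Lr\<^sup>2 / (2 * (\<alpha> * Lc)) + Lr / 2) * (\<Sum>d\<in>J. norm (x (Suc d) - x d))\<^sup>2
    \<le> (Lr / Lc * Lr * real \<tau> / \<alpha> + 2 * Lr * real \<tau>) / 2
        * (\<Sum>d\<in>{int k - int \<tau>..<int k}. (norm (x (nat (d + 1)) - x (nat d)))\<^sup>2)"
    (is "?c * ?S\<^sup>2 \<le> _ * ?T")
proof -
  have "nat (int d + 1) = Suc d" for d
    by arith
  then have "?S\<^sup>2 \<le> real \<tau> * ?T"
    using power2_sum_le_window[OF assms(1), of "\<lambda>d. norm (x (nat (d + 1)) - x (nat d))"] by simp
  then have "?c * ?S\<^sup>2 \<le> ?c * (real \<tau> * ?T)"
    using assms(2-4) by (intro mult_left_mono) auto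
  also have "\<dots> = (Lr / Lc * Lr * real \<tau> / \<alpha> + Lr * real \<tau>) / 2 * ?T"
    using assms(3,4) by (simp add: field_simps power2_eq_square)
  also have "\<dots> \<le> (Lr / Lc * Lr * real \<tau> / \<alpha> + 2 * Lr * real \<tau>) / 2 * ?T"
    using assms(2) by (intro mult_right_mono) (auto intro: sum_nonneg)
  finally show ?thesis .
qed

theorem mainTheorem9:
  fixes m :: nat and blk :: "'n::finite \<Rightarrow> nat"
    and f :: "real^'n \<Rightarrow> real" and gf :: "real^'n \<Rightarrow> real^'n"
    and g :: "nat \<Rightarrow> real^'n \<Rightarrow> ereal"
    and A :: "real^'n^'q::finite" and b :: "real^'q"
    and P :: "nat \<Rightarrow> real^'n^'n"
    and L :: "nat \<Rightarrow> real" and Lr :: real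
    and \<beta> \<rho> \<alpha> :: real and \<tau> k :: nat
    and x :: "nat \<Rightarrow> real^'n" and xhat :: "nat \<Rightarrow> real^'n"
    and r lam :: "nat \<Rightarrow> real^'q"
    and idx :: "nat \<Rightarrow> nat" and J :: "nat \<Rightarrow> nat set"
    and y :: "nat \<Rightarrow> real^'n" and z :: "real^'n"
  assumes blk_range: "\<forall>j. blk j < m"
    and f_convex: "convex_on UNIV f"
    and f_grad: "\<forall>u. (f has_derivative (\<lambda>h. gf u \<bullet> h)) (at u)"
    and gf_cont: "continuous_on UNIV gf"
    and g_block: "\<forall>i<m. \<forall>w. g i w = g i (blockproj blk i w)"
    and g_proper: "\<forall>i<m. proper_fun (g i)"
    and g_convex: "\<forall>i<m. ereal_convex (g i)"
    and g_lsc: "\<forall>i<m. ereal_lsc (g i)"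
    and L_pos: "\<forall>i<m. L i > 0"
    and Lip_block: "\<forall>i<m. \<forall>u v. norm (blockproj blk i (gf (u + blockproj blk i v) - gf u))
                        \<le> L i * norm (blockproj blk i v)"
    and Lip_full: "\<forall>i<m. \<forall>u v. norm (gf (u + blockproj blk i v) - gf u)
                        \<le> Lr * norm (blockproj blk i v)"
    and P_sym: "\<forall>i<m. transpose (P i) = P i"
    and P_psd: "\<forall>i<m. \<forall>v. 0 \<le> v \<bullet> (P i *v v)"
    and \<beta>_pos: "\<beta> > 0" and \<rho>_pos: "\<rho> > 0" and \<alpha>_pos: "\<alpha> > 0"
    and r0: "r 0 = A *v x 0 - b"
    and lam0: "lam 0 = 0"
    and idx_range: "\<forall>j<k. idx j < m"
    and x_step: "\<forall>j<k. block_update blk gf A \<beta> P g (idx j) (x j) (xhat j) (r j) (lam j) (x (Suc j))"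
    and r_step: "\<forall>j<k. r (Suc j) = r j + A *v (x (Suc j) - x j)"
    and lam_step: "\<forall>j<k. lam (Suc j) = lam j - \<rho> *\<^sub>R r (Suc j)"
    and delay: "\<forall>j\<le>k. J j \<subseteq> {j - \<tau>..<j} \<and> xhat j = x j + (\<Sum>d\<in>J j. x d - x (Suc d))"
    and y_step: "\<forall>i<m. block_update blk gf A \<beta> P g i (x k) (xhat k) (r k) (lam k) (y i)"
  shows
    "(let Lc = Max (L ` {..<m}); \<kappa> = Lr / Lc;
          D = {int k - int \<tau>..<int k}
      in (1 / real m) * (\<Sum>i<m. blockproj blk i (gf (xhat k)) \<bullet> (y i - z))
         \<ge> (1 / real m) * (\<Sum>i<m. f (y i) - f z)
           - (1 - 1 / real m) * (f (x k) - f z)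
           - (1/2) * ((1 / real m) * (\<Sum>i<m. wnorm2 (\<lambda>j. L (blk j) + \<alpha> * Lc) (y i - x k)))
           - (\<kappa> * Lr * real \<tau> / \<alpha> + 2 * Lr * real \<tau>) / (2 * real m)
               * (\<Sum>d\<in>D. (norm (x (nat (d + 1)) - x (nat d)))^2)
           - (1 / (2 * real m)) * (\<Sum>d\<in>D. wnorm2 (\<lambda>j. L (blk j)) (x (nat (d + 1)) - x (nat d))))"
proof -
  have "0 < m"
    using blk_range by (metis gr_zeroI less_nat_zero_code)
  define Lc where "Lc = Max (L ` {..<m})"
  have "L 0 \<le> Lc"
    unfolding Lc_def using \<open>0 < m\<close> by (intro Max_ge) auto
  then have "0 < Lc"
    using \<open>0 < m\<close> L_pos by fastforce
  then have "0 < \<alpha> * Lc"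
    using \<alpha>_pos by simp
  have "0 \<le> Lr"
    by (rule lipschitz_const_nonneg[OF blk_range Lip_full])
  have J_window: "J k \<subseteq> {k - \<tau>..<k}" and xhat_k: "xhat k = x k + (\<Sum>d\<in>J k. x d - x (Suc d))"
    using delay by auto
  have x_k: "x k = xhat k + (\<Sum>d\<in>J k. x (Suc d) - x d)"
    by (simp add: xhat_k sum_subtractf)
  have y_block: "\<forall>i<m. blockproj blk i (y i - x k) = y i - x k"
    using y_step by (auto intro: block_update_blockproj)
  have increments: "\<forall>d\<in>J k. idx d < m \<and> blockproj blk (idx d) (x (Suc d) - x d) = x (Suc d) - x d"
    using J_window by (intro block_update_increments[OF idx_range x_step]) auto
  have "0 \<le> (\<Sum>d\<in>{int k - int \<tau>..<int k}. wnorm2 (\<lambda>j. L (blk j)) (x (nat (d + 1)) - x (nat d)))"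
    unfolding wnorm2_def using L_pos blk_range
    by (intro sum_nonneg mult_nonneg_nonneg) (auto intro: less_imp_le)
  with sum_inner_blockproj_delayed_gradient_ge[OF blk_range f_convex f_grad Lip_block Lip_full
      \<open>0 \<le> Lr\<close> \<open>0 < \<alpha> * Lc\<close> finite_subset[OF J_window finite_atLeastLessThan] increments x_k y_block, of z]
    delay_penalty_le_window[OF J_window \<open>0 \<le> Lr\<close> \<open>0 < Lc\<close> \<alpha>_pos, of x]
  have "(\<Sum>i<m. f (y i) - f z) - (real m - 1) * (f (x k) - f z)
      - (\<Sum>i<m. wnorm2 (\<lambda>j. L (blk j) + \<alpha> * Lc) (y i - x k)) / 2
      - (Lr / Lc * Lr * real \<tau> / \<alpha> + 2 * Lr * real \<tau>) / 2
        * (\<Sum>d\<in>{int k - int \<tau>..<int k}. (norm (x (nat (d + 1)) - x (nat d)))\<^sup>2)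
      - (\<Sum>d\<in>{int k - int \<tau>..<int k}. wnorm2 (\<lambda>j. L (blk j)) (x (nat (d + 1)) - x (nat d))) / 2
      \<le> (\<Sum>i<m. blockproj blk i (gf (xhat k)) \<bullet> (y i - z))" (is "?R \<le> ?I")
    by linarith
  then have "(1 / real m) * ?R \<le> (1 / real m) * ?I"
    by (rule mult_left_mono) simp
  moreover have "(1 / real m) * ?R = (1 / real m) * (\<Sum>i<m. f (y i) - f z)
      - (1 - 1 / real m) * (f (x k) - f z)
      - (1/2) * ((1 / real m) * (\<Sum>i<m. wnorm2 (\<lambda>j. L (blk j) + \<alpha> * Lc) (y i - x k)))
      - (Lr / Lc * Lr * real \<tau> / \<alpha> + 2 * Lr * real \<tau>) / (2 * real m)
        * (\<Sum>d\<in>{int k - int \<tau>..<int k}. (norm (x (nat (d + 1)) - x (nat d)))\<^sup>2)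
      - (1 / (2 * real m))
        * (\<Sum>d\<in>{int k - int \<tau>..<int k}. wnorm2 (\<lambda>j. L (blk j)) (x (nat (d + 1)) - x (nat d)))"
    using \<open>0 < m\<close> by (simp add: field_simps)
  ultimately show ?thesis
    unfolding Let_def Lc_def[symmetric] by simp
qed

end
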